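(* The sets $\mathsf{M}^s\cap\mathsf{M}^n$ (of Epstein models) and $\mathsf{R}^s\cap\mathsf{R}^n$ (of Epstein relations) are undefinable.
   Context: Language: propositional letters $\Phi=\{p_0,p_1,\dots\}$; connectives $\neg$, $\lor,\wedge,\to,\leftrightarrow,\vartriangle,\looparrowright$; $\mathsf{FOR}$ the set of all formulas. An Epstein model is $\langle v,\mathfrak{R}\rangle$ with $v:\Phi\to\{0,1\}$ and $\mathfrak{R}\subseteq\mathsf{FOR}^2$ (an Epstein relation); truth: letters via $v$, boolean connectives classical, $\langle v,\mathfrak{R}\rangle\vDash\varphi\vartriangle\psi$ iff both true and $\langle\varphi,\psi\rangle\in\mathfrak{R}$; $\langle v,\mathfrak{R}\rangle\vDash\varphi\looparrowright\psi$ iff $\varphi\to\psi$ true and $\langle\varphi,\psi\rangle\in\mathfrak{R}$. $\mathfrak{R}\vDash\varphi$ iff true under every valuation. $\mathsf{R}^s$: symmetric relations; $\mathsf{R}^n$: relations $\mathfrak{R}$ with $\langle\neg\varphi,\psi\rangle\in\mathfrak{R}\Rightarrow\langle\varphi,\psi\rangle\in\mathfrak{R}$ for all $\varphi,\psi$; $\mathsf{M}^s$, $\mathsf{M}^n$: all models $\langle v,\mathfrak{R}\rangle$ with $\mathfrak{R}\in\mathsf{R}^s$, resp. $\mathfrak{R}\in\mathsf{R}^n$. A set $\mathsf{K}$ of relations (resp. models) is definable iff there is $\Gamma\subseteq\mathsf{FOR}$ such that for every relation $\mathfrak{R}$ (resp. model $\mathfrak{M}$): $\Gamma$ is valid on $\mathfrak{R}$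 (resp. true in $\mathfrak{M}$) iff it belongs to $\mathsf{K}$. *)

theory Defs
  imports Main
begin

datatype form =
    Var nat
  | Neg form
  | Disj form form
  | Conj form form
  | Impl form form
  | Equiv form form
  | ETri form form
  | ELoop form form

type_synonym erel = "(form \<times> form) set"

type_synonym emodel = "(nat \<Rightarrow> bool) \<times> erel"

fun holds :: "(nat \<Rightarrow> bool) \<Rightarrow> erel \<Rightarrow> form \<Rightarrow> bool" where
  "holds v R (Var n) = v n"
| "holds v R (Neg a) = (\<not> holds v R a)"
| "holds v R (Disj a b) = (holds v R a \<or> holds v R b)"
| "holds v R (Conj a b) = (holds v R a \<and> holds v R b)"
| "holds v R (Impl a b) = (holds v R a \<longrightarrow> holds v R b)"
| "holds v R (Equiv a b) = (holds v R a \<longleftrightarrow> holds v R b)"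
| "holds v R (ETri a b) = (holds v R a \<and> holds v R b \<and> (a, b) \<in> R)"
| "holds v R (ELoop a b) = ((holds v R a \<longrightarrow> holds v R b) \<and> (a, b) \<in> R)"

definition model_true :: "emodel \<Rightarrow> form \<Rightarrow> bool" where
  "model_true M \<phi> = holds (fst M) (snd M) \<phi>"

definition rel_valid :: "erel \<Rightarrow> form \<Rightarrow> bool" where
  "rel_valid R \<phi> = (\<forall>v. holds v R \<phi>)"

definition Rs :: "erel set" where
  "Rs = {R. sym R}"

definition Rn :: "erel set" where
  "Rn = {R. \<forall>\<phi> \<psi>. (Neg \<phi>, \<psi>) \<in> R \<longrightarrow> (\<phi>, \<psi>) \<in> R}"

definition Ms :: "emodel set" where
  "Ms = {M. snd M \<in> Rs}"

definition Mn :: "emodel set" where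
  "Mn = {M. snd M \<in> Rn}"

definition rel_definable :: "erel set \<Rightarrow> bool" where
  "rel_definable K = (\<exists>\<Gamma>::form set. \<forall>R. (\<forall>\<phi>\<in>\<Gamma>. rel_valid R \<phi>) \<longleftrightarrow> R \<in> K)"

definition model_definable :: "emodel set \<Rightarrow> bool" where
  "model_definable K = (\<exists>\<Gamma>::form set. \<forall>M. (\<forall>\<phi>\<in>\<Gamma>. model_true M \<phi>) \<longleftrightarrow> M \<in> K)"

end

theory Submission
  imports Defs
begin

text \<open>The pair \<open>(\<top>, \<not>\<top>)\<close> never contributes to the truth of an Epstein formula: both
  \<open>\<top> \<vartriangle> \<not>\<top>\<close> and \<open>\<top> \<looparrowright> \<not>\<top>\<close> are already false because \<open>\<not>\<top>\<close> is. So the full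
  relation and the full relation minus that pair validate (and make true) exactly the
  same formulas; the first is symmetric and closed under negation in the first argument,
  the second is not even symmetric. A definable class cannot separate them.\<close>

definition verum :: form where
  "verum = Impl (Var 0) (Var 0)"

lemma holds_diff_verum_neg_verum:
  "holds v (R - {(verum, Neg verum)}) \<phi> = holds v R \<phi>"
  by (induction \<phi>) (auto simp: verum_def)

lemma model_definable_invariant:
  assumes "model_definable K" and "\<And>\<phi>. model_true M \<phi> = model_true M' \<phi>"
  shows "M \<in> K \<longleftrightarrow> M' \<in> K"
proof -
  obtain \<Gamma> where "\<And>N. (\<forall>\<phi>\<in>\<Gamma>. model_true N \<phi>) \<longleftrightarrow> N \<in> K"
    using assms(1) by (auto simp: model_definable_def)
  then show ?thesis using assms(2) by metis
qed

lemma rel_definable_invariant: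
  assumes "rel_definable K" and "\<And>\<phi>. rel_valid R \<phi> = rel_valid R' \<phi>"
  shows "R \<in> K \<longleftrightarrow> R' \<in> K"
proof -
  obtain \<Gamma> where "\<And>S. (\<forall>\<phi>\<in>\<Gamma>. rel_valid S \<phi>) \<longleftrightarrow> S \<in> K"
    using assms(1) by (auto simp: rel_definable_def)
  then show ?thesis using assms(2) by metis
qed

lemma UNIV_in_Rs_Rn: "UNIV \<in> Rs \<inter> Rn"
  by (auto simp: Rs_def Rn_def sym_def)

lemma UNIV_diff_verum_neg_verum_notin_Rs: "UNIV - {(verum, Neg verum)} \<notin> Rs"
  by (auto simp: Rs_def sym_def verum_def)

theorem mainTheorem13:
  shows "\<not> model_definable (Ms \<inter> Mn) \<and> \<not> rel_definable (Rs \<inter> Rn)"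
proof
  let ?R = "UNIV - {(verum, Neg verum)}"
  show "\<not> model_definable (Ms \<inter> Mn)"
  proof
    fix v :: "nat \<Rightarrow> bool"
    assume "model_definable (Ms \<inter> Mn)"
    moreover have "model_true (v, UNIV) \<phi> = model_true (v, ?R) \<phi>" for \<phi>
      by (simp add: model_true_def holds_diff_verum_neg_verum)
    ultimately have "(v, UNIV) \<in> Ms \<inter> Mn \<longleftrightarrow> (v, ?R) \<in> Ms \<inter> Mn"
      by (rule model_definable_invariant)
    then show False
      using UNIV_in_Rs_Rn UNIV_diff_verum_neg_verum_notin_Rs by (simp add: Ms_def Mn_def)
  qed
  show "\<not> rel_definable (Rs \<inter> Rn)"
  proof
    assume "rel_definable (Rs \<inter> Rn)"
    moreover have "rel_valid UNIV \<phi> = rel_valid ?R \<phi>" for \<phi>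
      by (simp add: rel_valid_def holds_diff_verum_neg_verum)
    ultimately have "UNIV \<in> Rs \<inter> Rn \<longleftrightarrow> ?R \<in> Rs \<inter> Rn"
      by (rule rel_definable_invariant)
    then show False
      using UNIV_in_Rs_Rn UNIV_diff_verum_neg_verum_notin_Rs by blast
  qed
qed

end
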